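(* Let $k\ge2$, let $b$ be an irreducible Brauer diagram of size $k$ (i.e. $\mathrm{nc}(b\vee\mathbf{1}_k)=1$), and let $1\le i\ne j\le k$ and $e=e_{ij}$. Then $\mathrm{nc}(e\vee b)-\mathrm{nc}(b\vee\mathbf{1}_k)\in\{0,1\}$, and $\mathrm{nc}(e\vee b)=\mathrm{nc}(b\vee\mathbf{1}_k)+1$ if and only if $s(i)s(j)=-1$ for any orientation $s$ of $b$.
   Context: A Brauer diagram of size $k$ is a partition of $\{1,\dots,k,1',\dots,k'\}$ into two-element blocks (links). For partitions, $\vee$ is the join (finest common coarsening) and $\mathrm{nc}$ the number of blocks; $\mathbf{1}_k=\{\{x,x'\}:x\le k\}$. The projector $e_{ij}$ is the Brauer diagram $\{\{i,j\},\{i',j'\}\}\cup\{\{x,x'\}:x\ne i,j\}$. Orientation: let $\Gamma_b$ be the graph with vertices $\{1,\dots,k,1',\dots,k'\}$ whose edges are the links of $b$ together with the vertical edges $\{x,x'\}$, $x\le k$; each connected component is a cycle. An orientation of $b$ is a choice of orientation of each cycle of $\Gamma_b$; its sign function $s:\{1,\dots,k\}\to\{-1,1\}$ is $s(x)=1$ if the link of $b$ containing $x$ is incoming at $x$ for the chosen orientation, and $s(x)=-1$ otherwise. *)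

theory Defs
  imports Main
begin

text \<open>Points: (x, False) stands for x, (x, True) stands for x'.\<close>
type_synonym pt = "nat \<times> bool"

definition ground :: "nat \<Rightarrow> pt set" where
  "ground k = {1..k} \<times> UNIV"

definition is_partition :: "'a set \<Rightarrow> 'a set set \<Rightarrow> bool" where
  "is_partition A P \<longleftrightarrow> \<Union>P = A \<and> {} \<notin> P \<and>
     (\<forall>B\<in>P. \<forall>C\<in>P. B \<noteq> C \<longrightarrow> B \<inter> C = {})"

definition brauer :: "nat \<Rightarrow> pt set set \<Rightarrow> bool" where
  "brauer k b \<longleftrightarrow> is_partition (ground k) b \<and> (\<forall>B\<in>b. card B = 2)"

definition prel :: "'a set set \<Rightarrow> ('a \<times> 'a) set" where
  "prel P = {(x, y). \<exists>B\<in>P. x \<in> B \<and> y \<in> B}"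

definition pjoin :: "'a set set \<Rightarrow> 'a set set \<Rightarrow> 'a set set" where
  "pjoin P Q = (\<Union>P \<union> \<Union>Q) // ((prel P \<union> prel Q)\<^sup>*)"

definition nc :: "'a set set \<Rightarrow> nat" where
  "nc P = card P"

definition one_k :: "nat \<Rightarrow> pt set set" where
  "one_k k = {{(x, False), (x, True)} | x. x \<in> {1..k}}"

definition eproj :: "nat \<Rightarrow> nat \<Rightarrow> nat \<Rightarrow> pt set set" where
  "eproj k i j = {{(i, False), (j, False)}, {(i, True), (j, True)}} \<union>
     {{(x, False), (x, True)} | x. x \<in> {1..k} \<and> x \<noteq> i \<and> x \<noteq> j}"

text \<open>An orientation of b: every link and every vertical edge of the graph
  Gamma_b gets a direction (L = oriented links, V = oriented vertical edges),
  such that every vertex has exactly one incoming and one outgoing edge,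
  i.e. every cycle of Gamma_b is oriented consistently.\<close>
definition orientation :: "nat \<Rightarrow> pt set set \<Rightarrow> (pt \<times> pt) set \<Rightarrow> (pt \<times> pt) set \<Rightarrow> bool" where
  "orientation k b L V \<longleftrightarrow>
     L \<subseteq> {(u, v). {u, v} \<in> b} \<and>
     (\<forall>u v. {u, v} \<in> b \<longrightarrow> ((u, v) \<in> L \<longleftrightarrow> (v, u) \<notin> L)) \<and>
     V \<subseteq> {((x, False), (x, True)) | x. x \<in> {1..k}} \<union> {((x, True), (x, False)) | x. x \<in> {1..k}} \<and>
     (\<forall>x\<in>{1..k}. ((x, False), (x, True)) \<in> V \<longleftrightarrow> ((x, True), (x, False)) \<notin> V) \<and>
     (\<forall>v\<in>ground k. card {u. (u, v) \<in> L} + card {u. (u, v) \<in> V} = 1 \<and>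
                    card {w. (v, w) \<in> L} + card {w. (v, w) \<in> V} = 1)"

definition osign :: "(pt \<times> pt) set \<Rightarrow> nat \<Rightarrow> int" where
  "osign L x = (if \<exists>u. (u, (x, False)) \<in> L then 1 else -1)"

end

theory Submission
  imports Defs
begin

text \<open>
  The links of b and the vertical edges x -- x' are two perfect matchings of the ground set,
  with partner maps \<open>partner\<close> and \<open>vpartner\<close>; the map \<open>walk = partner \<circ> vpartner\<close> runs
  along a cycle of \<open>\<Gamma>\<^sub>b\<close>, a vertical edge followed by a link at each step.
  A parity argument shows that \<open>walk\<^sup>a x\<close> is never \<open>vpartner (walk\<^sup>c x)\<close>, so for
  irreducible b the single cycle consists of the points \<open>walk\<^sup>m i\<close> and their vertical
  partners.

  Replacing the vertical edges at i and j by the two links of \<open>e\<^sub>i\<^sub>j\<close> cuts this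
  cycle into two arcs and reconnects them. Starting at i and leaving through i', the cycle
  first meets column j either at j, which it then leaves through j', and the two arcs are
  glued into one cycle; or at j', and the arc from i' to j' closes up on its own, giving two
  cycles. An orientation orients the cycle consistently, so the link at \<open>walk\<^sup>m i\<close> is
  incoming iff the link at i is, and the link at \<open>vpartner (walk\<^sup>m i)\<close> is incoming
  iff the link at i is not. Hence \<open>s(i) s(j) = -1\<close> exactly in the second case.
\<close>

section \<open>Joins of partitions into pairs\<close>

lemma card_quotient_two_classes:
  assumes "sym r" and "trans r" and "\<And>x. (x, x) \<in> r"
    and "a \<in> A" and "c \<in> A" and "\<forall>y\<in>A. (a, y) \<in> r \<or> (c, y) \<in> r"
  shows "card (A // r) = (if (a, c) \<in> r then 1 else 2)"
proof -
  have same_class: "r `` {y} = r `` {z}" if "(y, z) \<in> r" for y z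
    using that assms(1,2) unfolding sym_def trans_def by blast
  have "A // r = {r `` {a}, r `` {c}}"
  proof
    show "A // r \<subseteq> {r `` {a}, r `` {c}}"
      using assms(6) same_class by (auto elim!: quotientE)
    show "{r `` {a}, r `` {c}} \<subseteq> A // r"
      using assms(4,5) by (auto intro: quotientI)
  qed
  moreover have "r `` {a} = r `` {c} \<longleftrightarrow> (a, c) \<in> r"
    using assms(3) same_class by blast
  ultimately show ?thesis by auto
qed

definition pairing_rel :: "'a set \<Rightarrow> ('a \<Rightarrow> 'a) \<Rightarrow> ('a \<times> 'a) set" where
  "pairing_rel A f = {(x, y). x \<in> A \<and> (y = x \<or> y = f x)}"

definition join_rel :: "'a set set \<Rightarrow> 'a set set \<Rightarrow> ('a \<times> 'a) set" where
  "join_rel P Q = (prel P \<union> prel Q)\<^sup>*"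

lemma sym_join_rel: "sym (join_rel P Q)"
  unfolding join_rel_def prel_def by (intro sym_rtrancl sym_Un) (auto simp: sym_def)

lemma trans_join_rel: "trans (join_rel P Q)"
  unfolding join_rel_def by (rule trans_rtrancl)

lemma refl_join_rel: "(x, x) \<in> join_rel P Q"
  unfolding join_rel_def by simp

lemma Union_eq_if_prel_eq_pairing_rel:
  assumes "prel P = pairing_rel A f"
  shows "\<Union>P = A"
proof -
  have "x \<in> \<Union>P \<longleftrightarrow> (x, x) \<in> prel P" for x by (auto simp: prel_def)
  then show ?thesis using assms by (auto simp: pairing_rel_def)
qed

lemma prel_eq_pairing_rel:
  assumes "\<And>x. x \<in> A \<Longrightarrow> {x, f x} \<in> P"
    and "\<And>B x. B \<in> P \<Longrightarrow> x \<in> B \<Longrightarrow> x \<in> A \<and> B = {x, f x}"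
  shows "prel P = pairing_rel A f"
proof (intro set_eqI iffI)
  fix z assume "z \<in> prel P"
  then obtain x y B where "z = (x, y)" "B \<in> P" "x \<in> B" "y \<in> B"
    unfolding prel_def by blast
  with assms(2)[of B x] show "z \<in> pairing_rel A f"
    unfolding pairing_rel_def by blast
next
  fix z assume "z \<in> pairing_rel A f"
  then obtain x y where "z = (x, y)" "x \<in> A" "y = x \<or> y = f x"
    unfolding pairing_rel_def by blast
  with assms(1)[of x] show "z \<in> prel P"
    unfolding prel_def by blast
qed

context
  fixes P Q :: "'a set set" and A :: "'a set" and f g :: "'a \<Rightarrow> 'a"
  assumes prel_P: "prel P = pairing_rel A f" and prel_Q: "prel Q = pairing_rel A g"
begin

lemma pjoin_pairings: "pjoin P Q = A // join_rel P Q"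
  using Union_eq_if_prel_eq_pairing_rel[OF prel_P] Union_eq_if_prel_eq_pairing_rel[OF prel_Q]
  by (simp add: pjoin_def join_rel_def)

lemma join_rel_pairing_left: "x \<in> A \<Longrightarrow> (x, f x) \<in> join_rel P Q"
  unfolding join_rel_def prel_P by (auto simp: pairing_rel_def)

lemma join_rel_pairing_right: "x \<in> A \<Longrightarrow> (x, g x) \<in> join_rel P Q"
  unfolding join_rel_def prel_Q by (auto simp: pairing_rel_def)

lemma join_rel_closed:
  assumes "\<And>x. x \<in> A \<Longrightarrow> x \<in> S \<Longrightarrow> f x \<in> S" and "\<And>x. x \<in> A \<Longrightarrow> x \<in> S \<Longrightarrow> g x \<in> S"
    and "(x, y) \<in> join_rel P Q" and "x \<in> S"
  shows "y \<in> S"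
proof -
  have "(prel P \<union> prel Q) `` S \<subseteq> S"
    using assms(1,2) by (auto simp: prel_P prel_Q pairing_rel_def)
  then have "join_rel P Q `` S = S"
    unfolding join_rel_def by (rule Image_closed_trancl)
  then show ?thesis using assms(3,4) by blast
qed

end

section \<open>Brauer diagrams and the cycles of \<open>\<Gamma>\<^sub>b\<close>\<close>

definition vpartner :: "pt \<Rightarrow> pt" where
  "vpartner v = (fst v, \<not> snd v)"

lemma vpartner_Pair [simp]: "vpartner (x, s) = (x, \<not> s)"
  by (simp add: vpartner_def)

lemma vpartner_vpartner [simp]: "vpartner (vpartner v) = v"
  by (simp add: vpartner_def)

lemma vpartner_neq [simp]: "vpartner v \<noteq> v"
  by (cases v) simp

lemma vpartner_in_ground_iff [simp]: "vpartner v \<in> ground k \<longleftrightarrow> v \<in> ground k"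
  by (cases v) (simp add: ground_def)

definition epartner :: "nat \<Rightarrow> nat \<Rightarrow> pt \<Rightarrow> pt" where
  "epartner i j v =
     (if fst v = i then (j, snd v) else if fst v = j then (i, snd v) else vpartner v)"

lemma prel_one_k: "prel (one_k k) = pairing_rel (ground k) vpartner"
proof (rule prel_eq_pairing_rel)
  fix x assume "x \<in> ground k"
  then obtain a s where "x = (a, s)" and "a \<in> {1..k}"
    by (auto simp: ground_def)
  moreover have "{(a, s), (a, \<not> s)} = {(a, False), (a, True)}"
    by (cases s) auto
  ultimately show "{x, vpartner x} \<in> one_k k"
    by (auto simp: one_k_def)
next
  fix B x assume "B \<in> one_k k" and "x \<in> B"
  then obtain a where "a \<in> {1..k}" and "B = {(a, False), (a, True)}"
    and "x = (a, False) \<or> x = (a, True)"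
    by (auto simp: one_k_def)
  then show "x \<in> ground k \<and> B = {x, vpartner x}"
    by (auto simp: ground_def)
qed

lemma prel_eproj:
  assumes "i \<in> {1..k}" and "j \<in> {1..k}" and "i \<noteq> j"
  shows "prel (eproj k i j) = pairing_rel (ground k) (epartner i j)"
proof (rule prel_eq_pairing_rel)
  have ij_block: "{(i, s), (j, s)} \<in> eproj k i j" for s
    by (cases s) (simp_all add: eproj_def)
  fix x assume "x \<in> ground k"
  then obtain a s where x: "x = (a, s)" and a: "a \<in> {1..k}"
    by (auto simp: ground_def)
  consider "a = i" | "a = j" | "a \<noteq> i" "a \<noteq> j" by blast
  then show "{x, epartner i j x} \<in> eproj k i j"
  proof cases
    case 1
    then show ?thesis using x ij_block by (simp add: epartner_def)
  next
    case 2
    then show ?thesis using x ij_block[of s] assms(3) by (simp add: epartner_def insert_commute)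
  next
    case 3
    have "{(a, s), (a, \<not> s)} = {(a, False), (a, True)}"
      by (cases s) auto
    then show ?thesis using x a 3 by (auto simp: eproj_def epartner_def)
  qed
next
  fix B x assume "B \<in> eproj k i j" and "x \<in> B"
  then consider s where "B = {(i, s), (j, s)}" "x = (i, s) \<or> x = (j, s)"
    | a where "a \<in> {1..k}" "a \<noteq> i" "a \<noteq> j" "B = {(a, False), (a, True)}"
        "x = (a, False) \<or> x = (a, True)"
    unfolding eproj_def by blast
  then show "x \<in> ground k \<and> B = {x, epartner i j x}"
  proof cases
    case 1
    then show ?thesis using assms by (auto simp: ground_def epartner_def)
  next
    case 2
    then show ?thesis by (auto simp: ground_def epartner_def)
  qed
qed

locale brauer_diagram =
  fixes k :: nat and b :: "pt set set"
  assumes brauer: "brauer k b"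
begin

abbreviation X :: "pt set" where
  "X \<equiv> ground k"

lemma Union_blocks: "\<Union>b = X"
  using brauer by (simp add: brauer_def is_partition_def)

lemma card_block: "B \<in> b \<Longrightarrow> card B = 2"
  using brauer by (simp add: brauer_def)

lemma block_unique: "B \<in> b \<Longrightarrow> C \<in> b \<Longrightarrow> x \<in> B \<Longrightarrow> x \<in> C \<Longrightarrow> B = C"
  using brauer unfolding brauer_def is_partition_def by blast

lemma ex1_partner:
  assumes "x \<in> X"
  shows "\<exists>!y. y \<noteq> x \<and> {x, y} \<in> b"
proof -
  obtain B where B: "B \<in> b" "x \<in> B"
    using assms Union_blocks by blast
  then obtain y where y: "B = {x, y}" "y \<noteq> x"
    using card_block[OF B(1)] by (metis card_2_iff doubleton_eq_iff insertE singletonD)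
  show ?thesis
  proof (rule ex1I[of _ y])
    show "y \<noteq> x \<and> {x, y} \<in> b" using y B by auto
  next
    fix z assume z: "z \<noteq> x \<and> {x, z} \<in> b"
    then have "{x, z} = B" using block_unique[of "{x, z}" B x] B by auto
    then show "z = y" using y z by (auto simp: doubleton_eq_iff)
  qed
qed

definition partner :: "pt \<Rightarrow> pt" where
  "partner x = (if x \<in> X then THE y. y \<noteq> x \<and> {x, y} \<in> b else x)"

lemma partner_block: "x \<in> X \<Longrightarrow> partner x \<noteq> x \<and> {x, partner x} \<in> b"
  unfolding partner_def using theI'[OF ex1_partner] by simp

lemma partner_in_ground: "x \<in> X \<Longrightarrow> partner x \<in> X"
  using partner_block Union_blocks by blast

lemma partner_eqI: "{x, y} \<in> b \<Longrightarrow> y \<noteq> x \<Longrightarrow> partner x = y"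
  using ex1_partner partner_block Union_blocks by blast

lemma partner_partner [simp]: "partner (partner x) = x"
proof (cases "x \<in> X")
  case True
  then show ?thesis
    using partner_block partner_eqI by (metis insert_commute)
qed (simp add: partner_def)

lemma prel_blocks: "prel b = pairing_rel X partner"
proof (rule prel_eq_pairing_rel)
  show "x \<in> X \<Longrightarrow> {x, partner x} \<in> b" for x
    using partner_block by blast
next
  fix B x assume "B \<in> b" and "x \<in> B"
  moreover from this have "x \<in> X"
    using Union_blocks by blast
  ultimately show "x \<in> X \<and> B = {x, partner x}"
    using block_unique partner_block by blast
qed

definition walk :: "pt \<Rightarrow> pt" where
  "walk = partner \<circ> vpartner"

lemma walk_Suc: "(walk ^^ Suc m) x = partner (vpartner ((walk ^^ m) x))"
  by (simp add: walk_def)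

lemma partner_walk_Suc: "partner ((walk ^^ Suc m) x) = vpartner ((walk ^^ m) x)"
  by (simp add: walk_def)

lemma walk_in_ground: "x \<in> X \<Longrightarrow> (walk ^^ m) x \<in> X"
  by (induction m) (auto simp: walk_def partner_in_ground)

lemma inj_walk: "inj walk"
  unfolding walk_def by (intro inj_compose) (metis partner_partner injI, metis vpartner_vpartner injI)

lemma walk_vpartner_walk: "walk (vpartner (walk x)) = vpartner x"
  by (simp add: walk_def)

lemma funpow_walk_vpartner: "(walk ^^ m) (vpartner ((walk ^^ m) x)) = vpartner x"
proof (induction m)
  case (Suc m)
  have outer: "(walk ^^ Suc m) y = (walk ^^ m) (walk y)" for y
    by (simp add: funpow_swap1)
  have "(walk ^^ Suc m) (vpartner ((walk ^^ Suc m) x))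
      = (walk ^^ m) (walk (vpartner ((walk ^^ Suc m) x)))"
    by (rule outer)
  also have "\<dots> = (walk ^^ m) (walk (vpartner (walk ((walk ^^ m) x))))"
    by simp
  also have "\<dots> = vpartner x"
    using Suc.IH by (simp only: walk_vpartner_walk)
  finally show ?case .
qed simp

text \<open>Otherwise \<open>vpartner x = (walk ^^ (c + a)) x\<close>, and cancelling
  \<open>walk ^^ h\<close> for \<open>c + a = 2h\<close> or \<open>2h + 1\<close> produces a fixed point of
  \<open>vpartner\<close> or of \<open>partner\<close>.\<close>
lemma walk_neq_vpartner_walk:
  assumes "x \<in> X"
  shows "(walk ^^ a) x \<noteq> vpartner ((walk ^^ c) x)"
proof
  assume "(walk ^^ a) x = vpartner ((walk ^^ c) x)"
  then have "(walk ^^ c) ((walk ^^ a) x) = vpartner x"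
    using funpow_walk_vpartner[of c x] by simp
  then have return: "(walk ^^ (c + a)) x = vpartner x"
    by (simp add: funpow_add)
  have cancel: "(walk ^^ h) y = (walk ^^ h) z \<Longrightarrow> y = z" for h y z
    using injD[OF inj_fn[OF inj_walk]] by blast
  have "\<exists>h. c + a = h + h \<or> c + a = h + Suc h"
    by presburger
  then obtain h where "c + a = h + h \<or> c + a = h + Suc h" ..
  then show False
  proof
    assume "c + a = h + h"
    then have "(walk ^^ h) ((walk ^^ h) x) = (walk ^^ h) (vpartner ((walk ^^ h) x))"
      using return funpow_walk_vpartner[of h x] by (simp add: funpow_add)
    then show False
      using cancel vpartner_neq by metis
  next
    assume "c + a = h + Suc h"
    then have "(walk ^^ h) ((walk ^^ Suc h) x) = (walk ^^ h) (vpartner ((walk ^^ h) x))"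
      using return funpow_walk_vpartner[of h x] by (simp only: funpow_add comp_apply)
    then have "partner (vpartner ((walk ^^ h) x)) = vpartner ((walk ^^ h) x)"
      using cancel walk_Suc by metis
    moreover have "vpartner ((walk ^^ h) x) \<in> X"
      using walk_in_ground[OF assms] by simp
    ultimately show False
      using partner_block by metis
  qed
qed

lemma walk_returns:
  assumes "x \<in> X"
  obtains n where "n > 0" and "(walk ^^ n) x = x"
proof (rule funpow_inj_finite[OF inj_walk])
  have "{y. \<exists>n. y = (walk ^^ n) x} \<subseteq> X"
    using walk_in_ground[OF assms] by blast
  moreover have "finite X"
    by (simp add: ground_def)
  ultimately show "finite {y. \<exists>n. y = (walk ^^ n) x}"
    by (rule finite_subset)
qed

lemma pjoin_blocks_one_k: "pjoin b (one_k k) = X // join_rel b (one_k k)"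
  by (rule pjoin_pairings[OF prel_blocks prel_one_k])

lemma irreducible_closed_subset:
  assumes irreducible: "nc (pjoin b (one_k k)) = 1" and "v \<in> X" and "v \<in> S"
    and partner_closed: "\<And>x. x \<in> X \<Longrightarrow> x \<in> S \<Longrightarrow> partner x \<in> S"
    and vpartner_closed: "\<And>x. x \<in> X \<Longrightarrow> x \<in> S \<Longrightarrow> vpartner x \<in> S"
  shows "X \<subseteq> S"
proof
  fix x assume "x \<in> X"
  let ?r = "join_rel b (one_k k)"
  have "card (X // ?r) = 1"
    using irreducible by (simp add: nc_def pjoin_blocks_one_k)
  then obtain C where C: "X // ?r = {C}"
    by (rule card_1_singletonE)
  have "?r `` {v} \<in> X // ?r" and "?r `` {x} \<in> X // ?r"
    using \<open>v \<in> X\<close> \<open>x \<in> X\<close> by (auto intro: quotientI)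
  then have "?r `` {v} = C" and "?r `` {x} = C"
    unfolding C by simp_all
  then have "x \<in> ?r `` {v}"
    using refl_join_rel[of x] by blast
  then have "(v, x) \<in> ?r"
    by blast
  then show "x \<in> S"
    using join_rel_closed[OF prel_blocks prel_one_k partner_closed vpartner_closed] \<open>v \<in> S\<close>
    by blast
qed

lemma irreducible_walk_cover:
  assumes irreducible: "nc (pjoin b (one_k k)) = 1" and v: "v \<in> X" and "x \<in> X"
  shows "\<exists>m. x = (walk ^^ m) v \<or> x = vpartner ((walk ^^ m) v)"
proof -
  let ?S = "{y. \<exists>m. y = (walk ^^ m) v \<or> y = vpartner ((walk ^^ m) v)}"
  obtain n where "n > 0" and "(walk ^^ n) v = v"
    using walk_returns[OF v] .
  then have walk_pred: "\<exists>m'. (walk ^^ m) v = (walk ^^ Suc m') v" for m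
    by (cases m) (metis Suc_pred funpow_0, blast)
  have "v \<in> ?S"
    by (auto intro: exI[of _ 0])
  moreover have "partner y \<in> ?S" if "y \<in> X" and "y \<in> ?S" for y
  proof -
    from \<open>y \<in> ?S\<close> obtain m where "y = (walk ^^ m) v \<or> y = vpartner ((walk ^^ m) v)"
      by blast
    then show ?thesis
    proof
      assume "y = (walk ^^ m) v"
      moreover obtain m' where "(walk ^^ m) v = (walk ^^ Suc m') v"
        using walk_pred by blast
      ultimately have "partner y = vpartner ((walk ^^ m') v)"
        by (simp only: partner_walk_Suc)
      then show ?thesis
        by blast
    next
      assume "y = vpartner ((walk ^^ m) v)"
      then have "partner y = (walk ^^ Suc m) v"
        by (simp only: walk_Suc)
      then show ?thesis
        by blast
    qed
  qed
  moreover have "vpartner y \<in> ?S" if "y \<in> X" and "y \<in> ?S" for y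
    using that by auto
  ultimately have "X \<subseteq> ?S"
    by (rule irreducible_closed_subset[OF irreducible v])
  then show ?thesis
    using \<open>x \<in> X\<close> by blast
qed

end

section \<open>Orientations\<close>

definition incoming :: "(pt \<times> pt) set \<Rightarrow> pt \<Rightarrow> bool" where
  "incoming L v \<longleftrightarrow> (\<exists>u. (u, v) \<in> L)"

lemma osign_incoming: "osign L x = (if incoming L (x, False) then 1 else -1)"
  by (simp add: osign_def incoming_def)

locale oriented_brauer_diagram = brauer_diagram +
  fixes L V :: "(pt \<times> pt) set"
  assumes orientation: "orientation k b L V"
begin

lemma links_in_blocks: "(u, v) \<in> L \<Longrightarrow> {u, v} \<in> b"
  using orientation[unfolded orientation_def, THEN conjunct1] by blast

lemma link_antisym: "{u, v} \<in> b \<Longrightarrow> (u, v) \<in> L \<longleftrightarrow> (v, u) \<notin> L"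
  using orientation[unfolded orientation_def, THEN conjunct2, THEN conjunct1] by blast

lemma verticals_in_columns:
  "V \<subseteq> {((x, False), (x, True)) | x. x \<in> {1..k}} \<union> {((x, True), (x, False)) | x. x \<in> {1..k}}"
  using orientation[unfolded orientation_def, THEN conjunct2, THEN conjunct2, THEN conjunct1] .

lemma vertical_antisym_column:
  "x \<in> {1..k} \<Longrightarrow> ((x, False), (x, True)) \<in> V \<longleftrightarrow> ((x, True), (x, False)) \<notin> V"
  using orientation[unfolded orientation_def, THEN conjunct2, THEN conjunct2, THEN conjunct2,
      THEN conjunct1] by blast

lemma in_degree: "v \<in> X \<Longrightarrow> card {u. (u, v) \<in> L} + card {u. (u, v) \<in> V} = 1"
  using orientation[unfolded orientation_def, THEN conjunct2, THEN conjunct2, THEN conjunct2,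
      THEN conjunct2] by blast

lemma link_eq_partner: "(u, v) \<in> L \<Longrightarrow> u = partner v"
proof -
  assume "(u, v) \<in> L"
  then have "{v, u} \<in> b"
    using links_in_blocks by (simp add: insert_commute)
  moreover from this have "u \<noteq> v"
    using card_block by fastforce
  ultimately show "u = partner v"
    using partner_eqI by simp
qed

lemma vertical_eq_vpartner: "(u, v) \<in> V \<Longrightarrow> u = vpartner v"
proof -
  assume "(u, v) \<in> V"
  then have "(u, v) \<in> {((x, False), (x, True)) | x. x \<in> {1..k}} \<union> {((x, True), (x, False)) | x. x \<in> {1..k}}"
    using verticals_in_columns by blast
  then show "u = vpartner v"
    by auto
qed

lemma vertical_antisym:
  assumes "x \<in> X"
  shows "(vpartner x, x) \<in> V \<longleftrightarrow> (x, vpartner x) \<notin> V"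
proof -
  obtain a s where "x = (a, s)" and "a \<in> {1..k}"
    using assms by (auto simp: ground_def)
  then show ?thesis
    using vertical_antisym_column[of a] by (cases s) auto
qed

lemma incoming_iff_partner_link: "incoming L v \<longleftrightarrow> (partner v, v) \<in> L"
  unfolding incoming_def using link_eq_partner by blast

lemma card_links_in: "card {u. (u, v) \<in> L} = (if incoming L v then 1 else 0)"
proof (cases "incoming L v")
  case True
  then have "{u. (u, v) \<in> L} = {partner v}"
    using link_eq_partner incoming_iff_partner_link by blast
  then show ?thesis
    using True by simp
next
  case False
  then have "{u. (u, v) \<in> L} = {}"
    unfolding incoming_def by blast
  then show ?thesis
    unfolding if_not_P[OF False] by (simp only: card.empty)
qed

lemma card_verticals_in:
  "card {u. (u, v) \<in> V} = (if (vpartner v, v) \<in> V then 1 else 0)"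
proof (cases "(vpartner v, v) \<in> V")
  case True
  then have "{u. (u, v) \<in> V} = {vpartner v}"
    using vertical_eq_vpartner by blast
  then show ?thesis
    using True by simp
next
  case False
  then have "{u. (u, v) \<in> V} = {}"
    using vertical_eq_vpartner by blast
  then show ?thesis
    unfolding if_not_P[OF False] by (simp only: card.empty)
qed

lemma incoming_iff_no_vertical_in:
  "v \<in> X \<Longrightarrow> incoming L v \<longleftrightarrow> (vpartner v, v) \<notin> V"
  using in_degree[of v] unfolding card_links_in card_verticals_in by (simp split: if_splits)

lemma incoming_partner:
  assumes "x \<in> X"
  shows "incoming L (partner x) \<longleftrightarrow> \<not> incoming L x"
proof -
  have "(x, partner x) \<in> L \<longleftrightarrow> (partner x, x) \<notin> L"
    using partner_block[OF assms] link_antisym by blast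
  then show ?thesis
    by (simp only: incoming_iff_partner_link partner_partner)
qed

lemma incoming_vpartner:
  assumes "x \<in> X"
  shows "incoming L (vpartner x) \<longleftrightarrow> \<not> incoming L x"
proof -
  have "incoming L (vpartner x) \<longleftrightarrow> (x, vpartner x) \<notin> V"
    using incoming_iff_no_vertical_in[of "vpartner x"] assms by simp
  also have "\<dots> \<longleftrightarrow> (vpartner x, x) \<in> V"
    using vertical_antisym[OF assms] by blast
  also have "\<dots> \<longleftrightarrow> \<not> incoming L x"
    using incoming_iff_no_vertical_in[OF assms] by blast
  finally show ?thesis .
qed

lemma incoming_walk:
  assumes "x \<in> X"
  shows "incoming L ((walk ^^ m) x) \<longleftrightarrow> incoming L x"
proof (induction m)
  case (Suc m)
  have "(walk ^^ m) x \<in> X"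
    using walk_in_ground[OF assms] .
  then show ?case
    using Suc.IH by (simp only: walk_Suc incoming_partner incoming_vpartner vpartner_in_ground_iff not_not)
qed simp

lemma incoming_eq_iff_walk_reaches:
  assumes "nc (pjoin b (one_k k)) = 1" and "v \<in> X" and "w \<in> X"
  shows "(incoming L w \<longleftrightarrow> incoming L v) \<longleftrightarrow> (\<exists>m. w = (walk ^^ m) v)"
proof
  assume same: "incoming L w \<longleftrightarrow> incoming L v"
  obtain m where "w = (walk ^^ m) v \<or> w = vpartner ((walk ^^ m) v)"
    using irreducible_walk_cover[OF assms] by blast
  moreover have "w \<noteq> vpartner ((walk ^^ m) v)"
  proof
    assume "w = vpartner ((walk ^^ m) v)"
    then have "incoming L w \<longleftrightarrow> \<not> incoming L v"
      using incoming_vpartner[OF walk_in_ground] incoming_walk \<open>v \<in> X\<close> by simp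
    with same show False
      by simp
  qed
  ultimately show "\<exists>m. w = (walk ^^ m) v"
    by blast
next
  assume "\<exists>m. w = (walk ^^ m) v"
  then obtain m where "w = (walk ^^ m) v" ..
  then show "incoming L w \<longleftrightarrow> incoming L v"
    using incoming_walk[OF \<open>v \<in> X\<close>] by simp
qed

end

section \<open>Joining an irreducible diagram with \<open>e\<^sub>i\<^sub>j\<close>\<close>

locale irreducible_projector = brauer_diagram +
  fixes i j :: nat
  assumes irreducible: "nc (pjoin b (one_k k)) = 1"
    and i: "i \<in> {1..k}" and j: "j \<in> {1..k}" and i_neq_j: "i \<noteq> j"
begin

abbreviation joined :: "(pt \<times> pt) set" where
  "joined \<equiv> join_rel (eproj k i j) b"

lemma prel_eproj_ij: "prel (eproj k i j) = pairing_rel X (epartner i j)"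
  using i j i_neq_j by (rule prel_eproj)

lemma joined_epartner: "x \<in> X \<Longrightarrow> (x, epartner i j x) \<in> joined"
  by (rule join_rel_pairing_left[OF prel_eproj_ij prel_blocks])

lemma joined_partner: "x \<in> X \<Longrightarrow> (x, partner x) \<in> joined"
  by (rule join_rel_pairing_right[OF prel_eproj_ij prel_blocks])

lemma joined_sym: "(x, y) \<in> joined \<Longrightarrow> (y, x) \<in> joined"
  using sym_join_rel by (rule symD)

lemma joined_trans: "(x, y) \<in> joined \<Longrightarrow> (y, z) \<in> joined \<Longrightarrow> (x, z) \<in> joined"
  using trans_join_rel by (rule transD)

lemma column_i_in_ground: "(i, s) \<in> X"
  using i by (simp add: ground_def)

lemma joined_to_column_i:
  assumes "x \<in> X"
  shows "((i, False), x) \<in> joined \<or> ((i, True), x) \<in> joined"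
proof -
  let ?S = "{x. ((i, False), x) \<in> joined \<or> ((i, True), x) \<in> joined}"
  have column_i: "(i, s) \<in> ?S" for s
    by (cases s) (simp_all add: refl_join_rel)
  have column_j: "(j, s) \<in> ?S" for s
    using joined_epartner[OF column_i_in_ground, of s] by (cases s) (auto simp: epartner_def)
  have "partner x \<in> ?S" if "x \<in> X" and "x \<in> ?S" for x
    using that joined_partner joined_trans by blast
  moreover have "vpartner x \<in> ?S" if "x \<in> X" and "x \<in> ?S" for x
  proof (cases "fst x = i \<or> fst x = j")
    case True
    then show ?thesis
      using column_i column_j by (cases x) auto
  next
    case False
    then have "epartner i j x = vpartner x"
      by (simp add: epartner_def)
    then show ?thesis
      using that joined_epartner joined_trans by fastforce
  qed
  ultimately have "X \<subseteq> ?S"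
    by (rule irreducible_closed_subset[OF irreducible column_i_in_ground column_i])
  then show ?thesis
    using assms by blast
qed

lemma nc_pjoin_eproj_if_joined:
  "nc (pjoin (eproj k i j) b) = (if ((i, False), (i, True)) \<in> joined then 1 else 2)"
  unfolding nc_def pjoin_pairings[OF prel_eproj_ij prel_blocks]
  by (rule card_quotient_two_classes[OF sym_join_rel trans_join_rel refl_join_rel
        column_i_in_ground column_i_in_ground]) (use joined_to_column_i in blast)

definition first_visit :: nat where
  "first_visit = (LEAST p. (walk ^^ p) (i, False) \<in> {(j, False), (j, True)})"

lemma walk_first_visit: "(walk ^^ first_visit) (i, False) \<in> {(j, False), (j, True)}"
proof -
  have "(j, False) \<in> X"
    using j by (simp add: ground_def)
  then obtain m where "(j, False) = (walk ^^ m) (i, False) \<or> (j, False) = vpartner ((walk ^^ m) (i, False))"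
    using irreducible_walk_cover[OF irreducible column_i_in_ground] by blast
  then have "(walk ^^ m) (i, False) \<in> {(j, False), (j, True)}"
  proof
    assume "(j, False) = vpartner ((walk ^^ m) (i, False))"
    then have "vpartner (j, False) = vpartner (vpartner ((walk ^^ m) (i, False)))"
      by (rule arg_cong)
    then show ?thesis
      by simp
  qed simp
  then show ?thesis
    unfolding first_visit_def by (rule LeastI)
qed

lemma before_first_visit: "m < first_visit \<Longrightarrow> (walk ^^ m) (i, False) \<notin> {(j, False), (j, True)}"
  unfolding first_visit_def by (rule not_less_Least)

lemma first_visit_pos: "0 < first_visit"
  using walk_first_visit i_neq_j by (cases first_visit) auto

lemma walk_neq_start_until_first_visit:
  assumes "0 < m" and "m \<le> first_visit"
  shows "(walk ^^ m) (i, False) \<noteq> (i, False)"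
proof
  assume return: "(walk ^^ m) (i, False) = (i, False)"
  have "(walk ^^ (first_visit - m)) ((walk ^^ m) (i, False)) = (walk ^^ (first_visit - m + m)) (i, False)"
    by (simp only: funpow_add comp_apply)
  also have "first_visit - m + m = first_visit"
    using assms(2) by simp
  finally have "(walk ^^ (first_visit - m)) ((walk ^^ m) (i, False)) = (walk ^^ first_visit) (i, False)" .
  then have "(walk ^^ (first_visit - m)) (i, False) \<in> {(j, False), (j, True)}"
    using return walk_first_visit by simp
  then show False
    using before_first_visit[of "first_visit - m"] assms(1) first_visit_pos by simp
qed

lemma column_before_first_visit:
  assumes "0 < m" and "m < first_visit"
  shows "fst ((walk ^^ m) (i, False)) \<noteq> i \<and> fst ((walk ^^ m) (i, False)) \<noteq> j"
proof -
  have "(walk ^^ m) (i, False) \<notin> {(j, False), (j, True)}"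
    using before_first_visit assms(2) .
  moreover have "(walk ^^ m) (i, False) \<noteq> (i, False)"
    using walk_neq_start_until_first_visit assms by simp
  moreover have "(walk ^^ m) (i, False) \<noteq> (i, True)"
    using walk_neq_vpartner_walk[of "(i, False)" m 0] column_i_in_ground by simp
  moreover obtain a s where "(walk ^^ m) (i, False) = (a, s)"
    by (cases "(walk ^^ m) (i, False)")
  ultimately show ?thesis
    by (cases s) auto
qed

lemma epartner_before_first_visit:
  "0 < m \<Longrightarrow> m < first_visit \<Longrightarrow>
    epartner i j ((walk ^^ m) (i, False)) = vpartner ((walk ^^ m) (i, False))"
  using column_before_first_visit by (simp add: epartner_def)

lemma joined_walk_until_first_visit:
  "m < first_visit \<Longrightarrow> ((i, True), (walk ^^ Suc m) (i, False)) \<in> joined"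
proof (induction m)
  case 0
  show ?case
    using joined_partner[OF column_i_in_ground, of True]
    by (simp only: walk_Suc funpow_0 vpartner_Pair not_False_eq_True)
next
  case (Suc m)
  let ?x = "(walk ^^ Suc m) (i, False)"
  have x: "?x \<in> X"
    using walk_in_ground[OF column_i_in_ground] .
  have "(?x, vpartner ?x) \<in> joined"
    using joined_epartner[OF x] epartner_before_first_visit[of "Suc m"] Suc.prems by simp
  moreover have "(vpartner ?x, (walk ^^ Suc (Suc m)) (i, False)) \<in> joined"
    using joined_partner[of "vpartner ?x"] x by (simp only: walk_Suc vpartner_in_ground_iff)
  ultimately show ?case
    using Suc joined_trans by (meson Suc_lessD)
qed

text \<open>The arc of the cycle from i' to the first visit of column j; if that visit is at j',
  the links of b and of \<open>e\<^sub>i\<^sub>j\<close> do not leave it.\<close>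
definition arc :: "pt set" where
  "arc = {(walk ^^ m) (i, False) | m. 0 < m \<and> m \<le> first_visit}
     \<union> {vpartner ((walk ^^ m) (i, False)) | m. m < first_visit}"

lemma partner_arc: "x \<in> arc \<Longrightarrow> partner x \<in> arc"
proof (unfold arc_def, elim UnE CollectE exE conjE)
  fix m assume x: "x = (walk ^^ m) (i, False)" and "0 < m" "m \<le> first_visit"
  then obtain n where "m = Suc n" and "n < first_visit"
    using gr0_implies_Suc by fastforce
  moreover from this have "partner x = vpartner ((walk ^^ n) (i, False))"
    by (simp only: x partner_walk_Suc)
  ultimately show "partner x \<in> {(walk ^^ m) (i, False) |m. 0 < m \<and> m \<le> first_visit}
      \<union> {vpartner ((walk ^^ m) (i, False)) |m. m < first_visit}"
    by blast
next
  fix m assume "x = vpartner ((walk ^^ m) (i, False))" "m < first_visit"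
  then have "partner x = (walk ^^ Suc m) (i, False)" and "0 < Suc m" "Suc m \<le> first_visit"
    by (simp_all only: walk_Suc)
  then show "partner x \<in> {(walk ^^ m) (i, False) |m. 0 < m \<and> m \<le> first_visit}
      \<union> {vpartner ((walk ^^ m) (i, False)) |m. m < first_visit}"
    by blast
qed

lemma epartner_arc:
  assumes visit: "(walk ^^ first_visit) (i, False) = (j, True)" and "x \<in> arc"
  shows "epartner i j x \<in> arc"
  using \<open>x \<in> arc\<close> unfolding arc_def
proof (elim UnE CollectE exE conjE)
  fix m assume x: "x = (walk ^^ m) (i, False)" and "0 < m" "m \<le> first_visit"
  show "epartner i j x \<in> {(walk ^^ m) (i, False) |m. 0 < m \<and> m \<le> first_visit}
      \<union> {vpartner ((walk ^^ m) (i, False)) |m. m < first_visit}"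
  proof (cases "m = first_visit")
    case True
    then have "epartner i j x = vpartner ((walk ^^ 0) (i, False))"
      using x visit i_neq_j by (simp add: epartner_def)
    then show ?thesis
      using first_visit_pos by blast
  next
    case False
    then have "epartner i j x = vpartner ((walk ^^ m) (i, False))" and "m < first_visit"
      using x epartner_before_first_visit \<open>0 < m\<close> \<open>m \<le> first_visit\<close> by simp_all
    then show ?thesis
      by blast
  qed
next
  fix m assume x: "x = vpartner ((walk ^^ m) (i, False))" and "m < first_visit"
  show "epartner i j x \<in> {(walk ^^ m) (i, False) |m. 0 < m \<and> m \<le> first_visit}
      \<union> {vpartner ((walk ^^ m) (i, False)) |m. m < first_visit}"
  proof (cases "m = 0")
    case True
    then have "epartner i j x = (walk ^^ first_visit) (i, False)"
      using x visit by (simp add: epartner_def)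
    then show ?thesis
      using first_visit_pos by blast
  next
    case False
    then have "fst x \<noteq> i" and "fst x \<noteq> j"
      using x column_before_first_visit[of m] \<open>m < first_visit\<close> by (simp_all add: vpartner_def)
    then have "epartner i j x = (walk ^^ m) (i, False)"
      using x by (simp add: epartner_def)
    then show ?thesis
      using False \<open>m < first_visit\<close> by auto
  qed
qed

lemma primed_i_in_arc: "(i, True) \<in> arc"
proof -
  have "(i, True) = vpartner ((walk ^^ 0) (i, False))"
    by simp
  then show ?thesis
    unfolding arc_def using first_visit_pos by blast
qed

lemma unprimed_i_notin_arc: "(i, False) \<notin> arc"
proof
  assume "(i, False) \<in> arc"
  then obtain m where "(i, False) = (walk ^^ m) (i, False) \<and> 0 < m \<and> m \<le> first_visit
      \<or> (i, False) = vpartner ((walk ^^ m) (i, False))"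
    unfolding arc_def by blast
  then show False
  proof
    assume "(i, False) = (walk ^^ m) (i, False) \<and> 0 < m \<and> m \<le> first_visit"
    then show False
      using walk_neq_start_until_first_visit by metis
  next
    assume "(i, False) = vpartner ((walk ^^ m) (i, False))"
    moreover have "(walk ^^ 0) (i, False) \<noteq> vpartner ((walk ^^ m) (i, False))"
      using walk_neq_vpartner_walk column_i_in_ground by blast
    ultimately show False
      by simp
  qed
qed

lemma not_joined_if_first_visit_primed:
  assumes visit: "(walk ^^ first_visit) (i, False) = (j, True)"
  shows "((i, True), (i, False)) \<notin> joined"
proof
  assume joined: "((i, True), (i, False)) \<in> joined"
  have epartner_closed: "epartner i j x \<in> arc" if "x \<in> X" and "x \<in> arc" for x
    using epartner_arc[OF visit \<open>x \<in> arc\<close>] .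
  have partner_closed: "partner x \<in> arc" if "x \<in> X" and "x \<in> arc" for x
    using partner_arc[OF \<open>x \<in> arc\<close>] .
  have "(i, False) \<in> arc"
    by (rule join_rel_closed[OF prel_eproj_ij prel_blocks epartner_closed partner_closed joined
          primed_i_in_arc])
  then show False
    using unprimed_i_notin_arc by contradiction
qed

lemma joined_iff_walk_reaches:
  "((i, False), (i, True)) \<in> joined \<longleftrightarrow> (\<exists>m. (j, False) = (walk ^^ m) (i, False))"
proof (cases "(walk ^^ first_visit) (i, False) = (j, False)")
  case True
  have "first_visit - 1 < first_visit" and last: "Suc (first_visit - 1) = first_visit"
    using first_visit_pos by simp_all
  then have "((i, True), (walk ^^ first_visit) (i, False)) \<in> joined"
    using joined_walk_until_first_visit by metis
  moreover have "((i, False), (j, False)) \<in> joined"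
    using joined_epartner[OF column_i_in_ground, of False] by (simp add: epartner_def)
  ultimately have "((i, False), (i, True)) \<in> joined"
    using True joined_sym joined_trans by metis
  moreover have "\<exists>m. (j, False) = (walk ^^ m) (i, False)"
    using True by (intro exI[of _ first_visit]) simp
  ultimately show ?thesis
    by simp
next
  case False
  then have visit: "(walk ^^ first_visit) (i, False) = (j, True)"
    using walk_first_visit by simp
  have "(j, False) \<noteq> (walk ^^ m) (i, False)" for m
    using walk_neq_vpartner_walk[of "(i, False)" m first_visit] column_i_in_ground visit by simp
  moreover have "((i, False), (i, True)) \<notin> joined"
    using not_joined_if_first_visit_primed[OF visit] joined_sym by blast
  ultimately show ?thesis
    by simp
qed

lemma nc_pjoin_eproj:
  "nc (pjoin (eproj k i j) b) = (if \<exists>m. (j, False) = (walk ^^ m) (i, False) then 1 else 2)"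
  by (simp only: nc_pjoin_eproj_if_joined joined_iff_walk_reaches)

end

theorem proposition4p7:
  fixes k i j :: nat and b :: "pt set set"
  assumes "k \<ge> 2"
    and "brauer k b"
    and "nc (pjoin b (one_k k)) = 1"
    and "i \<in> {1..k}" and "j \<in> {1..k}" and "i \<noteq> j"
  shows "int (nc (pjoin (eproj k i j) b)) - int (nc (pjoin b (one_k k))) \<in> {0, 1}
    \<and> (\<forall>L V. orientation k b L V \<longrightarrow>
          (nc (pjoin (eproj k i j) b) = nc (pjoin b (one_k k)) + 1
            \<longleftrightarrow> osign L i * osign L j = -1))"
proof -
  interpret irreducible_projector k b i j
    by unfold_locales (fact assms)+
  let ?reach = "\<exists>m. (j, False) = (walk ^^ m) (i, False)"
  have sign_iff: "osign L i * osign L j = -1 \<longleftrightarrow> \<not> ?reach" if "orientation k b L V" for L V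
  proof -
    interpret oriented_brauer_diagram k b L V
      by unfold_locales (fact that)
    have "(j, False) \<in> X"
      using assms(5) by (simp add: ground_def)
    then have "(incoming L (j, False) \<longleftrightarrow> incoming L (i, False)) \<longleftrightarrow> ?reach"
      by (rule incoming_eq_iff_walk_reaches[OF assms(3) column_i_in_ground])
    then show ?thesis
      unfolding osign_incoming
      by (cases "incoming L (i, False)"; cases "incoming L (j, False)") simp_all
  qed
  then show ?thesis
    using nc_pjoin_eproj assms(3) by simp
qed

end
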